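(* For every $n\ge 4$, $$\mathrm{bdim}(P_n)=\mathrm{bdim}(C_n)=\left\lfloor \frac{2n+2}{5}\right\rfloor,$$ where $P_n$ and $C_n$ are the path and the cycle on $n$ vertices.
   Context: $d(x,y)$ is the distance in $G$. For an integer $k\ge1$ let $d_k(x,y)=\min\{d(x,y),k+1\}$. A function $f:V(G)\to\mathbb{Z}_{\ge 0}$ is a resolving broadcast of $G$ if for all distinct $x,y\in V(G)$ there is $z\in V(G)$ with $f(z)=i>0$ and $d_i(x,z)\ne d_i(y,z)$. The broadcast dimension $\mathrm{bdim}(G)$ is the minimum of $\sum_{v\in V(G)}f(v)$ over all resolving broadcasts $f$ of $G$. *)

theory Defs
  imports Main
begin

text \<open>A graph is given by a vertex set V and a symmetric irreflexive adjacency
relation E.  The distance is the length of a shortest walk inside V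
(all graphs used below are finite and connected).\<close>

definition is_walk :: "'a set \<Rightarrow> ('a \<Rightarrow> 'a \<Rightarrow> bool) \<Rightarrow> 'a list \<Rightarrow> 'a \<Rightarrow> 'a \<Rightarrow> nat \<Rightarrow> bool" where
  "is_walk V E p x y k \<longleftrightarrow> length p = Suc k \<and> set p \<subseteq> V \<and> hd p = x \<and> last p = y
     \<and> (\<forall>i<k. E (p ! i) (p ! Suc i))"

definition gdist :: "'a set \<Rightarrow> ('a \<Rightarrow> 'a \<Rightarrow> bool) \<Rightarrow> 'a \<Rightarrow> 'a \<Rightarrow> nat" where
  "gdist V E x y = (LEAST k. \<exists>p. is_walk V E p x y k)"

definition tdist :: "'a set \<Rightarrow> ('a \<Rightarrow> 'a \<Rightarrow> bool) \<Rightarrow> nat \<Rightarrow> 'a \<Rightarrow> 'a \<Rightarrow> nat" where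
  "tdist V E k x y = min (gdist V E x y) (k + 1)"

definition resolving_broadcast :: "'a set \<Rightarrow> ('a \<Rightarrow> 'a \<Rightarrow> bool) \<Rightarrow> ('a \<Rightarrow> nat) \<Rightarrow> bool" where
  "resolving_broadcast V E f \<longleftrightarrow>
     (\<forall>x\<in>V. \<forall>y\<in>V. x \<noteq> y \<longrightarrow>
        (\<exists>z\<in>V. f z > 0 \<and> tdist V E (f z) x z \<noteq> tdist V E (f z) y z))"

definition bdim :: "'a set \<Rightarrow> ('a \<Rightarrow> 'a \<Rightarrow> bool) \<Rightarrow> nat" where
  "bdim V E = (LEAST s. \<exists>f. resolving_broadcast V E f \<and> (\<Sum>v\<in>V. f v) = s)"

definition path_adj :: "nat \<Rightarrow> nat \<Rightarrow> nat \<Rightarrow> bool" where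
  "path_adj n u v \<longleftrightarrow> u < n \<and> v < n \<and> (v = u + 1 \<or> u = v + 1)"

definition cycle_adj :: "nat \<Rightarrow> nat \<Rightarrow> nat \<Rightarrow> bool" where
  "cycle_adj n u v \<longleftrightarrow> u < n \<and> v < n \<and> u \<noteq> v \<and> (v = (u + 1) mod n \<or> u = (v + 1) mod n)"

end

theory Submission
  imports Defs
begin

text \<open>Say that x hears z if f z > 0 and d(x, z) \<le> f z.  In a subgraph of the cycle
  the broadcast of z is heard by at most 2 f z + 1 vertices; at most f z + 1 of them hear nothing
  else, since only z can tell them apart, by their distance to z; and at most one vertex hears
  nothing at all.  Hence all vertices but one hear at least two broadcasts or are counted in the
  second bound, and double counting gives 2 (n - 1) \<le> \<Sum>z. 3 f z + 2 \<le> 5 \<Sum>z. f z.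

  Upper bound.  Broadcasting with power 1 from the vertices congruent to 1 or 3 modulo 5, with an
  adjustment at the end of the path, costs \<lfloor>(2n + 2)/5\<rfloor> and resolves both P_n and C_n.\<close>

definition graph_connected :: "'a set \<Rightarrow> ('a \<Rightarrow> 'a \<Rightarrow> bool) \<Rightarrow> bool" where
  "graph_connected V E \<longleftrightarrow> (\<forall>x\<in>V. \<forall>y\<in>V. \<exists>p k. is_walk V E p x y k)"

lemma gdist_le: "is_walk V E p x y k \<Longrightarrow> gdist V E x y \<le> k"
  unfolding gdist_def by (metis (mono_tags) Least_le)

lemma gdist_walk:
  assumes "graph_connected V E" "x \<in> V" "y \<in> V"
  obtains p where "is_walk V E p x y (gdist V E x y)"
proof -
  from assms have "\<exists>k p. is_walk V E p x y k" unfolding graph_connected_def by blast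
  then have "\<exists>p. is_walk V E p x y (gdist V E x y)" unfolding gdist_def by (rule LeastI_ex)
  with that show thesis by blast
qed

lemma is_walk_0_iff: "is_walk V E p x y 0 \<longleftrightarrow> p = [x] \<and> x = y \<and> x \<in> V"
  unfolding is_walk_def by (auto simp: length_Suc_conv)

lemma is_walk_1_iff: "is_walk V E p x y 1 \<longleftrightarrow> p = [x, y] \<and> x \<in> V \<and> y \<in> V \<and> E x y"
  unfolding is_walk_def by (auto simp: length_Suc_conv numeral_2_eq_2)

lemma graph_connected_interval:
  assumes "\<And>u. Suc u < n \<Longrightarrow> E u (Suc u) \<and> E (Suc u) u"
  shows "graph_connected {0..<n} E"
  unfolding graph_connected_def
proof (intro ballI)
  have forward: "is_walk {0..<n} E (map (\<lambda>i. x + i) [0..<Suc (y - x)]) x y (y - x)"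
    if "x \<le> y" "y < n" for x y
    using that assms by (auto simp: is_walk_def last_map hd_map simp del: upt_Suc)
  have backward: "is_walk {0..<n} E (map (\<lambda>i. x - i) [0..<Suc (x - y)]) x y (x - y)"
    if "y \<le> x" "x < n" for x y
  proof -
    have "E (x - i) (x - Suc i)" if "i < x - y" for i
      using assms[of "x - Suc i"] that \<open>x < n\<close> by (simp add: Suc_diff_Suc)
    then show ?thesis using that by (auto simp: is_walk_def last_map hd_map simp del: upt_Suc)
  qed
  fix x y assume "x \<in> {0..<n}" "y \<in> {0..<n}"
  then show "\<exists>p k. is_walk {0..<n} E p x y k"
    using forward[of x y] backward[of y x] by (cases "x \<le> y") auto
qed

lemma cycle_adj_mod_step:
  assumes "cycle_adj n u v"
  obtains t :: int where "\<bar>t\<bar> = 1" "int v mod int n = (int u + t) mod int n"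
proof -
  from assms have "v = (u + 1) mod n \<or> u = (v + 1) mod n" unfolding cycle_adj_def by auto
  then show thesis
  proof
    assume "v = (u + 1) mod n"
    then have "int v mod int n = (int u + 1) mod int n" by (simp add: zmod_int ac_simps)
    then show thesis by (rule that[of 1, rotated]) simp
  next
    assume "u = (v + 1) mod n"
    then have "int u mod int n = (int v + 1) mod int n" by (simp add: zmod_int ac_simps)
    then have "int v mod int n = (int u + -1) mod int n"
      by (metis add_diff_cancel_right' mod_diff_left_eq uminus_add_conv_diff add.commute)
    then show thesis by (rule that[of "-1", rotated]) simp
  qed
qed

lemma walk_displacement:
  assumes sub: "\<And>u v. E u v \<Longrightarrow> cycle_adj n u v" and walk: "is_walk V E p x y k"
  obtains t :: int where "\<bar>t\<bar> \<le> int k" "int y mod int n = (int x + t) mod int n"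
proof -
  have len: "length p = Suc k" and steps: "\<forall>i<k. E (p ! i) (p ! Suc i)"
    using walk unfolding is_walk_def by auto
  have "\<exists>t. \<bar>t\<bar> \<le> int i \<and> int (p ! i) mod int n = (int (p ! 0) + t) mod int n" if "i \<le> k" for i
    using that
  proof (induction i)
    case 0
    show ?case by (intro exI[of _ 0]) simp
  next
    case (Suc i)
    then obtain t where t: "\<bar>t\<bar> \<le> int i" "int (p ! i) mod int n = (int (p ! 0) + t) mod int n"
      by auto
    obtain s :: int where s: "\<bar>s\<bar> = 1" "int (p ! Suc i) mod int n = (int (p ! i) + s) mod int n"
      using cycle_adj_mod_step sub steps Suc.prems by (metis Suc_le_lessD)
    have "int (p ! Suc i) mod int n = (int (p ! i) mod int n + s) mod int n"
      using s(2) by (simp add: mod_add_left_eq)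
    also have "\<dots> = (int (p ! 0) + (t + s)) mod int n"
      using t(2) by (simp add: mod_add_left_eq add.assoc)
    finally show ?case using t(1) s(1) by (intro exI[of _ "t + s"]) auto
  qed
  moreover have "p ! 0 = x" "p ! k = y"
    using walk len unfolding is_walk_def
    by (auto simp: hd_conv_nth last_conv_nth simp flip: length_greater_0_conv)
  ultimately show thesis using that by (metis order_refl)
qed

lemma card_ball_le:
  assumes sub: "\<And>u v. E u v \<Longrightarrow> cycle_adj n u v" and conn: "graph_connected {0..<n} E"
    and z: "z < n"
  shows "card {x\<in>{0..<n}. gdist {0..<n} E x z \<le> r} \<le> 2 * r + 1"
proof -
  let ?pos = "\<lambda>t. nat ((int z + t) mod int n)"
  have "{x\<in>{0..<n}. gdist {0..<n} E x z \<le> r} \<subseteq> ?pos ` {-int r..int r}"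
  proof
    fix x assume "x \<in> {x\<in>{0..<n}. gdist {0..<n} E x z \<le> r}"
    then have x: "x < n" and le: "gdist {0..<n} E x z \<le> r" by auto
    obtain p where "is_walk {0..<n} E p x z (gdist {0..<n} E x z)"
      using gdist_walk conn x z by (metis atLeastLessThan_iff zero_le)
    then obtain t where t: "\<bar>t\<bar> \<le> int (gdist {0..<n} E x z)"
      "int z mod int n = (int x + t) mod int n"
      using walk_displacement[OF sub] by blast
    have "(int z - t) mod int n = ((int x + t) mod int n - t) mod int n"
      using t(2) by (metis mod_diff_left_eq)
    also have "\<dots> = int x" using x by (simp add: mod_diff_left_eq)
    finally have "x = ?pos (- t)" by simp
    moreover have "- t \<in> {-int r..int r}" using t(1) le by auto
    ultimately show "x \<in> ?pos ` {-int r..int r}" by blast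
  qed
  then have "card {x\<in>{0..<n}. gdist {0..<n} E x z \<le> r} \<le> card (?pos ` {-int r..int r})"
    by (intro card_mono) auto
  also have "\<dots> \<le> card {-int r..int r}" by (rule card_image_le) simp
  finally show ?thesis by simp
qed

definition heard :: "'a set \<Rightarrow> ('a \<Rightarrow> 'a \<Rightarrow> bool) \<Rightarrow> ('a \<Rightarrow> nat) \<Rightarrow> 'a \<Rightarrow> 'a set" where
  "heard V E f x = {z\<in>V. 0 < f z \<and> gdist V E x z \<le> f z}"

lemma tdist_unheard:
  "z \<in> V \<Longrightarrow> 0 < f z \<Longrightarrow> z \<notin> heard V E f x \<Longrightarrow> tdist V E (f z) x z = f z + 1"
  unfolding heard_def tdist_def by simp

lemma card_unheard_le_1:
  assumes "finite V" "resolving_broadcast V E f"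
  shows "card {x\<in>V. heard V E f x = {}} \<le> 1"
proof -
  have "x = y" if xy: "x \<in> V" "y \<in> V" "heard V E f x = {}" "heard V E f y = {}" for x y
  proof (rule ccontr)
    assume "x \<noteq> y"
    then obtain w where "w \<in> V" "0 < f w" "tdist V E (f w) x w \<noteq> tdist V E (f w) y w"
      using assms(2) xy unfolding resolving_broadcast_def by blast
    then show False using xy(3,4) by (simp add: tdist_unheard)
  qed
  then show ?thesis using assms(1) by (auto simp: card_le_Suc0_iff_eq)
qed

lemma card_hearing_only_le:
  assumes "finite V" "resolving_broadcast V E f"
  shows "card {x\<in>V. heard V E f x = {z}} \<le> f z + 1"
proof -
  let ?H = "{x\<in>V. heard V E f x = {z}}"
  have inj: "inj_on (\<lambda>x. gdist V E x z) ?H"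
  proof (rule inj_onI, rule ccontr)
    fix x y assume x: "x \<in> ?H" and y: "y \<in> ?H" and eq: "gdist V E x z = gdist V E y z"
      and "x \<noteq> y"
    then obtain w where w: "w \<in> V" "0 < f w" "tdist V E (f w) x w \<noteq> tdist V E (f w) y w"
      using assms(2) unfolding resolving_broadcast_def by blast
    show False
    proof (cases "w = z")
      case True
      then show False using w(3) eq unfolding tdist_def by simp
    next
      case False
      then have "w \<notin> heard V E f x" "w \<notin> heard V E f y" using x y by auto
      then show False using w by (simp add: tdist_unheard)
    qed
  qed
  have "(\<lambda>x. gdist V E x z) ` ?H \<subseteq> {0..f z}" unfolding heard_def by auto
  then have "card ((\<lambda>x. gdist V E x z) ` ?H) \<le> card {0..f z}"
    by (rule card_mono[OF finite_atLeastAtMost])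
  then show ?thesis using card_image[OF inj] by simp
qed

lemma sum_card_heard_le:
  assumes fin: "finite V"
    and ball: "\<And>z r. z \<in> V \<Longrightarrow> card {x\<in>V. gdist V E x z \<le> r} \<le> 2 * r + 1"
  shows "(\<Sum>x\<in>V. card (heard V E f x)) \<le> (\<Sum>z\<in>{z\<in>V. 0 < f z}. 2 * f z + 1)"
proof -
  let ?S = "{z\<in>V. 0 < f z}"
  have "(\<Sum>x\<in>V. card (heard V E f x)) = (\<Sum>x\<in>V. \<Sum>z\<in>{z\<in>?S. gdist V E x z \<le> f z}. 1)"
    unfolding heard_def by (simp add: conj_assoc)
  also have "\<dots> = (\<Sum>z\<in>?S. \<Sum>x\<in>{x\<in>V. gdist V E x z \<le> f z}. 1)"
    using fin by (intro sum.swap_restrict) auto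
  also have "\<dots> \<le> (\<Sum>z\<in>?S. 2 * f z + 1)"
    using ball by (intro sum_mono) auto
  finally show ?thesis .
qed

lemma card_hearing_one_le:
  assumes fin: "finite V" and rb: "resolving_broadcast V E f"
  shows "card {x\<in>V. card (heard V E f x) = 1} \<le> (\<Sum>z\<in>{z\<in>V. 0 < f z}. f z + 1)"
proof -
  let ?S = "{z\<in>V. 0 < f z}"
  have finS: "finite ?S" using fin by simp
  have "{x\<in>V. card (heard V E f x) = 1} \<subseteq> (\<Union>z\<in>?S. {x\<in>V. heard V E f x = {z}})"
    by (auto simp: card_1_singleton_iff heard_def)
  then have "card {x\<in>V. card (heard V E f x) = 1} \<le> card (\<Union>z\<in>?S. {x\<in>V. heard V E f x = {z}})"
    using fin finS by (intro card_mono) auto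
  also have "\<dots> \<le> (\<Sum>z\<in>?S. card {x\<in>V. heard V E f x = {z}})" by (rule card_UN_le[OF finS])
  also have "\<dots> \<le> (\<Sum>z\<in>?S. f z + 1)"
    by (intro sum_mono card_hearing_only_le[OF fin rb])
  finally show ?thesis .
qed

lemma resolving_broadcast_cost_lower_bound:
  assumes fin: "finite V"
    and ball: "\<And>z r. z \<in> V \<Longrightarrow> card {x\<in>V. gdist V E x z \<le> r} \<le> 2 * r + 1"
    and rb: "resolving_broadcast V E f"
  shows "2 * card V \<le> 5 * (\<Sum>v\<in>V. f v) + 2"
proof -
  define S where "S = {z\<in>V. 0 < f z}"
  define c where "c x = card (heard V E f x)" for x
  define A where "A = {x\<in>V. heard V E f x \<noteq> {}}"
  have "2 * card A = (\<Sum>x\<in>V. if x \<in> A then 2 else 0)"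
    using fin unfolding A_def by (simp add: sum.If_cases Int_def)
  also have "\<dots> \<le> (\<Sum>x\<in>V. c x + (if c x = 1 then 1 else 0))"
  proof (rule sum_mono)
    fix x
    have "finite (heard V E f x)" using fin unfolding heard_def by simp
    then have "heard V E f x \<noteq> {} \<longleftrightarrow> c x \<noteq> 0" unfolding c_def by simp
    then show "(if x \<in> A then 2 else 0) \<le> c x + (if c x = 1 then 1 else 0)"
      unfolding A_def by auto
  qed
  also have "\<dots> = (\<Sum>x\<in>V. c x) + card {x\<in>V. c x = 1}"
    using fin by (simp add: sum.distrib sum.If_cases Int_def)
  also have "\<dots> \<le> (\<Sum>z\<in>S. 2 * f z + 1) + (\<Sum>z\<in>S. f z + 1)"
    using sum_card_heard_le[OF fin ball] card_hearing_one_le[OF fin rb]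
    unfolding c_def S_def by (rule add_mono)
  also have "\<dots> \<le> (\<Sum>z\<in>S. 5 * f z)"
    unfolding sum.distrib[symmetric] S_def by (intro sum_mono) auto
  also have "\<dots> = 5 * (\<Sum>v\<in>V. f v)"
    using fin unfolding S_def sum_distrib_left by (intro sum.mono_neutral_left) auto
  finally have "2 * card A \<le> 5 * (\<Sum>v\<in>V. f v)" .
  moreover have "card V = card A + card {x\<in>V. heard V E f x = {}}"
    using fin unfolding A_def
    by (subst card_Un_disjoint[symmetric]) (auto intro: arg_cong[where f = card])
  ultimately show ?thesis using card_unheard_le_1[OF fin rb] by linarith
qed

definition tier :: "('a \<Rightarrow> 'a \<Rightarrow> bool) \<Rightarrow> 'a \<Rightarrow> 'a \<Rightarrow> nat" where
  "tier E x z = (if x = z then 0 else if E x z then 1 else 2)"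

lemma tdist_1_eq_tier:
  assumes conn: "graph_connected V E" and x: "x \<in> V" and z: "z \<in> V"
  shows "tdist V E 1 x z = tier E x z"
proof -
  obtain p where p: "is_walk V E p x z (gdist V E x z)" using gdist_walk[OF conn x z] .
  consider "x = z" | "x \<noteq> z" "E x z" | "x \<noteq> z" "\<not> E x z" by blast
  then show ?thesis
  proof cases
    case 1
    then have "gdist V E x z = 0" using gdist_le[of V E "[x]" x z 0] x by (simp add: is_walk_0_iff)
    then show ?thesis using 1 by (simp add: tdist_def tier_def)
  next
    case 2
    then have "is_walk V E [x, z] x z 1" using x z by (simp add: is_walk_def)
    then have "gdist V E x z \<le> 1" by (rule gdist_le)
    moreover have "gdist V E x z \<noteq> 0" using p 2 by (metis is_walk_0_iff)
    ultimately show ?thesis using 2 by (simp add: tdist_def tier_def)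
  next
    case 3
    then have "gdist V E x z \<noteq> 0" "gdist V E x z \<noteq> 1"
      using p by (metis is_walk_0_iff is_walk_1_iff)+
    then show ?thesis using 3 by (simp add: tdist_def tier_def)
  qed
qed

lemma resolving_broadcast_of_tiers:
  assumes conn: "graph_connected V E" and "B \<subseteq> V"
    and sep: "\<And>x y. x \<in> V \<Longrightarrow> y \<in> V \<Longrightarrow> x \<noteq> y \<Longrightarrow> \<exists>z\<in>B. tier E x z \<noteq> tier E y z"
  shows "resolving_broadcast V E (\<lambda>z. of_bool (z \<in> B))"
  unfolding resolving_broadcast_def
proof (intro ballI impI)
  fix x y assume xy: "x \<in> V" "y \<in> V" "x \<noteq> y"
  then obtain z where z: "z \<in> B" "tier E x z \<noteq> tier E y z" using sep by blast
  have "z \<in> V" using z \<open>B \<subseteq> V\<close> by blast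
  with z xy have "tdist V E 1 x z \<noteq> tdist V E 1 y z"
    by (simp only: tdist_1_eq_tier[OF conn] not_False_eq_True)
  with z \<open>B \<subseteq> V\<close> show "\<exists>z\<in>V. (0::nat) < of_bool (z \<in> B) \<and>
      tdist V E (of_bool (z \<in> B)) x z \<noteq> tdist V E (of_bool (z \<in> B)) y z"
    by (intro bexI[of _ z]) auto
qed

lemma tier_path_adj:
  assumes "x < n" "z < n"
  shows "tier (path_adj n) x z = (if x = z then 0 else if z = x + 1 \<or> x = z + 1 then 1 else 2)"
  using assms unfolding tier_def path_adj_def by auto

lemma cycle_adj_iff:
  assumes "x < n" "z < n"
  shows "cycle_adj n x z \<longleftrightarrow>
    x \<noteq> z \<and> (z = x + 1 \<or> x = z + 1 \<or> (x = 0 \<and> z + 1 = n) \<or> (z = 0 \<and> x + 1 = n))"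
proof -
  have "(x + 1) mod n = (if x + 1 = n then 0 else x + 1)"
    "(z + 1) mod n = (if z + 1 = n then 0 else z + 1)"
    using assms by auto
  then show ?thesis unfolding cycle_adj_def using assms by auto
qed

lemma tier_cycle_adj:
  assumes "x < n" "z < n"
  shows "tier (cycle_adj n) x z = (if x = z then 0
    else if z = x + 1 \<or> x = z + 1 \<or> (x = 0 \<and> z + 1 = n) \<or> (z = 0 \<and> x + 1 = n) then 1 else 2)"
  using assms by (simp add: tier_def cycle_adj_iff)

text \<open>If n \<equiv> 3 (mod 5), the vertices n-3 and n-1 would both be adjacent to the beacon n-2
  and to no other beacon, so that beacon is moved to n-1.  For n = 4 the pattern \<open>{1, 3}\<close>
  fails on the cycle (0 and 2 both neighbour 1 and 3), and \<open>{0, 1}\<close> is used instead.\<close>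
definition beacons :: "nat \<Rightarrow> nat set" where
  "beacons n = (if n = 4 then {0, 1}
     else if n mod 5 = 3 then insert (n - 1) ({z. z < n \<and> z mod 5 \<in> {1, 3}} - {n - 2})
     else {z. z < n \<and> z mod 5 \<in> {1, 3}})"

lemma mem_beacons:
  assumes "n \<noteq> 4"
  shows "z \<in> beacons n \<longleftrightarrow> z < n \<and> ((z mod 5 \<in> {1, 3} \<and> \<not> (n mod 5 = 3 \<and> z + 2 = n))
    \<or> (n mod 5 = 3 \<and> z + 1 = n))"
  using assms by (auto simp: beacons_def)

lemma card_residues_1_3: "card {z. z < m \<and> z mod 5 \<in> {1, 3::nat}} = (2 * m + 2) div 5"
proof (induction m)
  case 0
  then show ?case by simp
next
  case (Suc m)
  have "{z. z < Suc m \<and> z mod 5 \<in> {1, 3}} =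
    (if m mod 5 \<in> {1, 3} then insert m else id) {z. z < m \<and> z mod 5 \<in> {1, 3}}"
    by (auto simp: less_Suc_eq)
  moreover have "(2 * Suc m + 2) div 5 = (2 * m + 2) div 5 + (if m mod 5 \<in> {1, 3} then 1 else 0)"
    unfolding insert_iff empty_iff by presburger
  ultimately show ?case using Suc by simp
qed

lemma card_beacons:
  assumes "4 \<le> n"
  shows "card (beacons n) = (2 * n + 2) div 5"
proof -
  let ?R = "{z. z < n \<and> z mod 5 \<in> {1, 3::nat}}"
  consider "n = 4" | "n \<noteq> 4" "n mod 5 = 3" | "n \<noteq> 4" "n mod 5 \<noteq> 3" by blast
  then show ?thesis
  proof cases
    case 1
    then show ?thesis by (simp add: beacons_def)
  next
    case 2
    then obtain k where "n = 5 * k + 3" by (metis div_mult_mod_eq mult.commute)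
    then have "n - 2 \<in> ?R" "n - 1 \<notin> ?R" by (simp_all add: mod_Suc)
    moreover have "0 < card ?R" using \<open>n - 2 \<in> ?R\<close> by (auto simp: card_gt_0_iff)
    ultimately have "card (beacons n) = card ?R" using 2 by (simp add: beacons_def card_insert_if)
    then show ?thesis using card_residues_1_3[of n] by simp
  next
    case 3
    then show ?thesis using card_residues_1_3[of n] by (simp add: beacons_def)
  qed
qed

lemma beacons_4_separate:
  assumes "x < y" "y < 4"
  shows "\<exists>z\<in>beacons 4. tier (path_adj 4) x z \<noteq> tier (path_adj 4) y z
    \<and> tier (cycle_adj 4) x z \<noteq> tier (cycle_adj 4) y z"
proof -
  have "x = 0 \<and> y = 1 \<or> x = 0 \<and> y = 2 \<or> x = 0 \<and> y = 3
      \<or> x = 1 \<and> y = 2 \<or> x = 1 \<and> y = 3 \<or> x = 2 \<and> y = 3"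
    using assms by auto
  then show ?thesis
    by (elim disjE conjE) (simp_all add: beacons_def tier_def path_adj_def cycle_adj_def)
qed

lemma non_beacons_separate:
  assumes "5 \<le> n" "x < y" "y < n" and x: "x \<notin> beacons n" and y: "y \<notin> beacons n"
  shows "\<exists>z\<in>beacons n. tier (path_adj n) x z \<noteq> tier (path_adj n) y z
    \<and> tier (cycle_adj n) x z \<noteq> tier (cycle_adj n) y z"
proof -
  let ?B = "beacons n"
  note tiers = tier_path_adj tier_cycle_adj
  have "n \<noteq> 4" using \<open>5 \<le> n\<close> by simp
  note mem = mem_beacons[OF this]
  have "x mod 5 = 2 \<or> x mod 5 = 4 \<or> x mod 5 = 0" using x y assms unfolding mem by auto
  then consider "x mod 5 = 2 \<or> x mod 5 = 4" | "x mod 5 = 0" "y = x + 2"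
    | "x mod 5 = 0" "y \<noteq> x + 2" "x + 1 \<in> ?B" | "x mod 5 = 0" "x + 1 \<notin> ?B" by metis
  then show ?thesis
  proof cases
    case 1
    then have "(x - 1) mod 5 = 1 \<or> (x - 1) mod 5 = 3"
      by (cases x) (auto simp: mod_Suc split: if_splits)
    then have "x - 1 \<in> ?B" using 1 assms unfolding mem by auto
    then show ?thesis using 1 assms tiers by (intro bexI[of _ "x - 1"]) auto
  next
    case 2
    then have "(x + 3) mod 5 = 3" "(x + 5) mod 5 = 0" by (simp_all add: mod_add_left_eq[symmetric])
    moreover have "x + 3 \<noteq> n"
    proof
      assume "x + 3 = n"
      with 2 \<open>(x + 3) mod 5 = 3\<close> have "y \<in> ?B" unfolding mem by auto
      with y show False by blast
    qed
    ultimately have "x + 3 \<in> ?B" "x + 3 < n" using 2 assms unfolding mem by auto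
    then show ?thesis using 2 assms tiers by (intro bexI[of _ "x + 3"]) auto
  next
    case 3
    then show ?thesis using assms tiers by (intro bexI[of _ "x + 1"]) auto
  next
    case 4
    then have "(x + 1) mod 5 = 1" "(x + 3) mod 5 = 3"
      by (simp_all add: mod_add_left_eq[symmetric] del: One_nat_def)
    then have "y = x + 1" "x + 2 \<in> ?B" "x + 2 < n" using 4 x y assms unfolding mem by auto
    then show ?thesis using assms tiers by (intro bexI[of _ "x + 2"]) auto
  qed
qed

lemma beacons_separate:
  assumes "4 \<le> n" "x < y" "y < n"
  shows "\<exists>z\<in>beacons n. tier (path_adj n) x z \<noteq> tier (path_adj n) y z
    \<and> tier (cycle_adj n) x z \<noteq> tier (cycle_adj n) y z"
proof (cases "n = 4")
  case True
  then show ?thesis using beacons_4_separate assms by simp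
next
  case False
  then consider "x \<in> beacons n" | "y \<in> beacons n" | "x \<notin> beacons n" "y \<notin> beacons n" by blast
  then show ?thesis
  proof cases
    case 1
    then show ?thesis using assms by (intro bexI[of _ x]) (auto simp: tier_def)
  next
    case 2
    then show ?thesis using assms by (intro bexI[of _ y]) (auto simp: tier_def)
  next
    case 3
    with False assms show ?thesis by (intro non_beacons_separate) auto
  qed
qed

lemma path_adj_imp_cycle_adj: "path_adj n u v \<Longrightarrow> cycle_adj n u v"
  unfolding path_adj_def cycle_adj_def by auto

lemma bdim_eqI:
  assumes "resolving_broadcast V E g" "(\<Sum>v\<in>V. g v) = s"
    and "\<And>f. resolving_broadcast V E f \<Longrightarrow> s \<le> (\<Sum>v\<in>V. f v)"
  shows "bdim V E = s"
  unfolding bdim_def by (rule Least_equality) (use assms in auto)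

lemma bdim_cycle_subgraph:
  assumes n: "4 \<le> n" and sub: "\<And>u v. E u v \<Longrightarrow> cycle_adj n u v"
    and conn: "graph_connected {0..<n} E"
    and sep: "\<And>x y. x < y \<Longrightarrow> y < n \<Longrightarrow> \<exists>z\<in>beacons n. tier E x z \<noteq> tier E y z"
  shows "bdim {0..<n} E = (2 * n + 2) div 5"
proof (rule bdim_eqI)
  have "beacons n \<subseteq> {0..<n}" using n by (auto simp: beacons_def)
  moreover have "\<exists>z\<in>beacons n. tier E x z \<noteq> tier E y z" if "x < n" "y < n" "x \<noteq> y" for x y
    using that sep[of x y] sep[of y x] by (metis linorder_neq_iff)
  ultimately show "resolving_broadcast {0..<n} E (\<lambda>z. of_bool (z \<in> beacons n))"
    by (intro resolving_broadcast_of_tiers[OF conn]) auto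
  show "(\<Sum>v\<in>{0..<n}. of_bool (v \<in> beacons n)) = (2 * n + 2) div 5"
    using \<open>beacons n \<subseteq> {0..<n}\<close> card_beacons[OF n]
    by (simp add: sum.If_cases Int_absorb1)
next
  fix f assume "resolving_broadcast {0..<n} E f"
  with card_ball_le[OF sub conn] have "2 * n \<le> 5 * (\<Sum>v\<in>{0..<n}. f v) + 2"
    using resolving_broadcast_cost_lower_bound[of "{0..<n}" E f] by simp
  then show "(2 * n + 2) div 5 \<le> (\<Sum>v\<in>{0..<n}. f v)" by linarith
qed

theorem mainTheorem2:
  fixes n :: nat
  assumes "n \<ge> 4"
  shows "bdim {0..<n} (path_adj n) = (2 * n + 2) div 5
       \<and> bdim {0..<n} (cycle_adj n) = (2 * n + 2) div 5"
proof
  show "bdim {0..<n} (path_adj n) = (2 * n + 2) div 5"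
    by (rule bdim_cycle_subgraph[OF assms path_adj_imp_cycle_adj])
      (auto intro: graph_connected_interval simp: path_adj_def dest: beacons_separate[OF assms])
  show "bdim {0..<n} (cycle_adj n) = (2 * n + 2) div 5"
    by (rule bdim_cycle_subgraph[OF assms])
      (auto intro: graph_connected_interval simp: cycle_adj_def dest: beacons_separate[OF assms])
qed

end
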